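(* Let $p$ be the characteristic of $\mathbb{F}_q$, $t\ge1$, $l\ge1$ with $\gcd(l,p)=1$, and $m=lp^t$, so that $x^{m}-1=\prod_{s\in T_l}M_s(x)^{p^t}$. Let $v_1,v_2\in\mathcal{R}=\mathbb{F}_q[x]/(x^m-1)$ with $\gcd(v_1v_2-1,x^m-1)=1$, and for each $s\in T_l$ let $r_{1s},r_{2s}$ be integers with $0<r_{1s}<r_{2s}<p^t-r_{2(-s)}$. Let $\mathcal{C}$ be the QC code of length $2m$ generated by $\big(\prod_{s}M_s^{r_{1s}},\,v_1\prod_sM_s^{r_{1s}}\big)$ and $\big(v_2\prod_sM_s^{r_{2s}},\,\prod_sM_s^{r_{2s}}\big)$ (products over $s\in T_l$). Then $\mathcal{C}^{\perp_E}$ is the QC code generated by $\big(\prod_sM_s^{p^t-r_{1(-s)}},\,-\overline{v_2}\prod_sM_s^{p^t-r_{1(-s)}}\big)$ and $\big(-\overline{v_1}\prod_sM_s^{p^t-r_{2(-s)}},\,\prod_sM_s^{p^t-r_{2(-s)}}\big)$, and $\mathcal{C}^{\perp_E}\subseteq\mathcal{C}$.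
   Context: For an integer $s$, the $q$-cyclotomic coset modulo $l$ containing $s$ is $C_{(s,l)}=\{s,sq,\dots,sq^{i_s-1}\}\bmod l$, $i_s$ minimal with $sq^{i_s}\equiv s\pmod l$; $T_l$ is the set of smallest representatives of these cosets. For an integer $s$, $r_{i(-s)}$ denotes $r_{i s'}$ where $s'\in T_l$ is the representative of the coset containing $-s \bmod l$. With $\alpha$ a primitive $l$-th root of unity, $M_s(x)=\prod_{i\in C_{(s,l)}}(x-\alpha^i)$. Elements of $\mathcal{R}$ are identified with representatives of degree $<m$; $[k]=(k_0,\dots,k_{m-1})$; $\overline{k}(x)=k(x^{-1})\bmod(x^m-1)$. The QC code generated by $(u_{i1},u_{i2})$, $i=1,2$, is $\{([r_1u_{11}+r_2u_{21}],[r_1u_{12}+r_2u_{22}]):r_i\in\mathcal{R}\}\subseteq\mathbb{F}_q^{2m}$; $\mathcal{C}^{\perp_E}$ is the dual w.r.t. $\sum u_iv_i$. *)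

theory Defs
  imports "HOL-Computational_Algebra.Computational_Algebra"
begin

text \<open>F is a subfield of the field 'e (F plays the role of F_q).\<close>
definition is_subfield :: "'e::field set \<Rightarrow> bool" where
  "is_subfield F \<longleftrightarrow> 0 \<in> F \<and> 1 \<in> F \<and> (\<forall>a\<in>F. \<forall>b\<in>F. a + b \<in> F \<and> a * b \<in> F)
     \<and> (\<forall>a\<in>F. - a \<in> F) \<and> (\<forall>a\<in>F. inverse a \<in> F)"

definition poly_over :: "'e::field set \<Rightarrow> 'e poly \<Rightarrow> bool" where
  "poly_over F k \<longleftrightarrow> (\<forall>i. coeff k i \<in> F)"

definition cyc_coset :: "nat \<Rightarrow> nat \<Rightarrow> nat \<Rightarrow> nat set" where
  "cyc_coset q l s = {s * q ^ j mod l | j. True}"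

definition cyc_reps :: "nat \<Rightarrow> nat \<Rightarrow> nat set" where
  "cyc_reps q l = {s. s < l \<and> s = Min (cyc_coset q l s)}"

definition neg_rep :: "nat \<Rightarrow> nat \<Rightarrow> nat \<Rightarrow> nat" where
  "neg_rep q l s = Min (cyc_coset q l ((l - s mod l) mod l))"

definition Mpoly :: "nat \<Rightarrow> nat \<Rightarrow> 'e::field \<Rightarrow> nat \<Rightarrow> 'e poly" where
  "Mpoly q l \<alpha> s = (\<Prod>i\<in>cyc_coset q l s. [:- (\<alpha> ^ i), 1:])"

definition xm1 :: "nat \<Rightarrow> 'e::field poly" where
  "xm1 m = monom 1 m - 1"

definition vecR :: "nat \<Rightarrow> 'e::field poly \<Rightarrow> 'e list" where
  "vecR m k = map (\<lambda>i. coeff (k mod xm1 m) i) [0..<m]"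

text \<open>conj k = k(x^-1) mod (x^m - 1).\<close>
definition conjbar :: "nat \<Rightarrow> 'e::field poly \<Rightarrow> 'e poly" where
  "conjbar m k = (\<Sum>i<m. monom (coeff (k mod xm1 m) i) ((m - i) mod m))"

definition qc_code :: "'e::field set \<Rightarrow> nat \<Rightarrow> 'e poly \<Rightarrow> 'e poly \<Rightarrow> 'e poly \<Rightarrow> 'e poly \<Rightarrow> 'e list set" where
  "qc_code F m u11 u12 u21 u22 =
     {vecR m (r1 * u11 + r2 * u21) @ vecR m (r1 * u12 + r2 * u22) | r1 r2.
        poly_over F r1 \<and> poly_over F r2}"

definition euclid_dual :: "'e::field set \<Rightarrow> nat \<Rightarrow> 'e list set \<Rightarrow> 'e list set" where
  "euclid_dual F n C = {v. length v = n \<and> set v \<subseteq> F \<and>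
      (\<forall>c\<in>C. (\<Sum>i<n. c ! i * v ! i) = 0)}"

end

theory Submission
  imports Defs "HOL-Number_Theory.Cong"
begin

(* Identify F^(2m) with R^2, where R = F[x]/(x^m - 1) and [k] is the coefficient vector of k.
   The Euclidean inner product of [a] @ [b] and [c] @ [d] is the constant term of
   a c(x^-1) + b d(x^-1), a nondegenerate form on R; hence [c] @ [d] is orthogonal to C exactly
   when x^m - 1 divides g1 (c(x^-1) + v1 d(x^-1)) and g2 (v2 c(x^-1) + d(x^-1)), where g1, g2 are
   the two generator products.  Writing x^m - 1 = g1 H1 = g2 H2, this says that H1 and H2 divide
   these two combinations; since 1 - v1 v2 is a unit modulo x^m - 1, one can solve for c(x^-1)
   and d(x^-1) and substitute x^-1 for x again.  Over the cyclotomic factorisation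
   x^m - 1 = prod M_s^(p^t), substituting x^-1 turns M_s into M_(-s) up to a unit, so the
   reciprocals of H1, H2 are the products h1, h2 of the statement.  The inequalities on the
   exponents make g2 divide h1 and h2, which gives the inclusion of the dual in C. *)

section \<open>Polynomials over a subfield\<close>

locale subfield =
  fixes F :: "'e::field set"
  assumes subfield: "is_subfield F"
begin

lemma zero_mem: "0 \<in> F" and one_mem: "1 \<in> F"
  using subfield by (simp_all add: is_subfield_def)

lemma add_mem: "a \<in> F \<Longrightarrow> b \<in> F \<Longrightarrow> a + b \<in> F"
  and mult_mem: "a \<in> F \<Longrightarrow> b \<in> F \<Longrightarrow> a * b \<in> F"
  and uminus_mem: "a \<in> F \<Longrightarrow> - a \<in> F"
  and inverse_mem: "a \<in> F \<Longrightarrow> inverse a \<in> F"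
  using subfield by (simp_all add: is_subfield_def)

lemma diff_mem: "a \<in> F \<Longrightarrow> b \<in> F \<Longrightarrow> a - b \<in> F"
  using add_mem[of a "- b"] uminus_mem[of b] by simp

lemma divide_mem: "a \<in> F \<Longrightarrow> b \<in> F \<Longrightarrow> a / b \<in> F"
  by (simp add: divide_inverse mult_mem inverse_mem)

lemma sum_mem: "(\<And>i. i \<in> A \<Longrightarrow> f i \<in> F) \<Longrightarrow> sum f A \<in> F"
  by (induction A rule: infinite_finite_induct) (auto simp: zero_mem add_mem)

lemma of_nat_mem: "of_nat n \<in> F"
  by (induction n) (auto simp: zero_mem one_mem add_mem)

lemma poly_over_const: "c \<in> F \<Longrightarrow> poly_over F [:c:]"
  by (auto simp: poly_over_def coeff_pCons zero_mem split: nat.splits)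

lemma poly_over_0: "poly_over F 0" and poly_over_1: "poly_over F 1"
  using poly_over_const[OF zero_mem] poly_over_const[OF one_mem] by (simp_all add: one_pCons)

lemma poly_over_monom: "c \<in> F \<Longrightarrow> poly_over F (monom c n)"
  by (auto simp: poly_over_def coeff_monom zero_mem)

lemma poly_over_add: "poly_over F a \<Longrightarrow> poly_over F b \<Longrightarrow> poly_over F (a + b)"
  and poly_over_uminus: "poly_over F a \<Longrightarrow> poly_over F (- a)"
  and poly_over_diff: "poly_over F a \<Longrightarrow> poly_over F b \<Longrightarrow> poly_over F (a - b)"
  by (auto simp: poly_over_def add_mem uminus_mem diff_mem)

lemma poly_over_mult: "poly_over F a \<Longrightarrow> poly_over F b \<Longrightarrow> poly_over F (a * b)"
  unfolding poly_over_def coeff_mult by (auto intro!: sum_mem mult_mem)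

lemma poly_over_sum: "(\<And>i. i \<in> A \<Longrightarrow> poly_over F (f i)) \<Longrightarrow> poly_over F (sum f A)"
  by (induction A rule: infinite_finite_induct) (auto simp: poly_over_0 poly_over_add)

lemma poly_over_prod: "(\<And>i. i \<in> A \<Longrightarrow> poly_over F (f i)) \<Longrightarrow> poly_over F (prod f A)"
  by (induction A rule: infinite_finite_induct) (auto simp: poly_over_1 poly_over_mult)

lemma poly_over_power: "poly_over F a \<Longrightarrow> poly_over F (a ^ n)"
  by (induction n) (auto simp: poly_over_1 poly_over_mult)

lemma poly_over_pcompose: "poly_over F a \<Longrightarrow> poly_over F b \<Longrightarrow> poly_over F (pcompose a b)"
proof (induction a)
  case (pCons c a)
  then have "c \<in> F" "poly_over F a"
    unfolding poly_over_def by (metis coeff_pCons_0, metis coeff_pCons_Suc)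
  with pCons show ?case by (simp add: pcompose_pCons poly_over_add poly_over_const poly_over_mult)
qed (simp add: poly_over_0)

lemmas poly_over_intros =
  poly_over_add poly_over_mult poly_over_uminus poly_over_diff poly_over_1 poly_over_prod poly_over_power

text \<open>The coefficients of the quotient are recovered from the top down, each step dividing by
  the leading coefficient of b.\<close>
lemma poly_over_dvd_quotient:
  assumes a: "poly_over F a" and b: "poly_over F b" and "b \<noteq> 0" and a_eq: "a = b * c"
  shows "poly_over F c"
proof -
  let ?d = "degree b"
  have lc: "lead_coeff b \<in> F" "lead_coeff b \<noteq> 0"
    using b \<open>b \<noteq> 0\<close> by (auto simp: poly_over_def)
  have step: "coeff c k \<in> F" if above: "\<And>i. k < i \<Longrightarrow> coeff c i \<in> F" for k
  proof -
    have "coeff a (k + ?d) = (\<Sum>i\<le>k + ?d. coeff c i * coeff b (k + ?d - i))"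
      by (simp add: a_eq mult.commute[of b c] coeff_mult)
    also have "\<dots> = (\<Sum>i\<in>{k} \<union> {k<..k + ?d}. coeff c i * coeff b (k + ?d - i))"
      by (rule sum.mono_neutral_right) (auto intro!: coeff_eq_0)
    also have "\<dots> = coeff c k * lead_coeff b + (\<Sum>i\<in>{k<..k + ?d}. coeff c i * coeff b (k + ?d - i))"
      by (subst sum.union_disjoint) auto
    finally have "coeff c k * lead_coeff b
        = coeff a (k + ?d) - (\<Sum>i\<in>{k<..k + ?d}. coeff c i * coeff b (k + ?d - i))"
      by (simp add: algebra_simps)
    also have "\<dots> \<in> F"
      using a b above by (auto simp: poly_over_def intro!: diff_mem sum_mem mult_mem)
    finally have "coeff c k * lead_coeff b / lead_coeff b \<in> F"
      using lc divide_mem by blast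
    with lc show ?thesis by simp
  qed
  have "coeff c k \<in> F" for k
  proof (induction "Suc (degree c) - k" arbitrary: k rule: less_induct)
    case less
    show ?case
    proof (cases "k > degree c")
      case True then show ?thesis by (simp add: coeff_eq_0 zero_mem)
    next
      case False
      show ?thesis by (rule step, rule less) (use False in auto)
    qed
  qed
  then show ?thesis by (simp add: poly_over_def)
qed

end

section \<open>The ring F[x]/(x^m - 1)\<close>

lemma dvd_power_minus_one: "(a::'a::comm_ring_1) - 1 dvd a ^ k - 1"
proof (induction k)
  case (Suc k)
  have "a ^ Suc k - 1 = a * (a ^ k - 1) + (a - 1)" by (simp add: algebra_simps)
  with Suc show ?case by (metis dvd_add dvd_mult dvd_refl)
qed simp

lemma pcompose_monom: "pcompose (monom c n) y = smult c (y ^ n)"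
proof (induction n arbitrary: c)
  case (Suc n)
  have "monom c (Suc n) = monom c n * [:0, 1:]"
    by (simp add: monom_Suc mult_monom[symmetric] monom_altdef)
  with Suc show ?case by (simp add: pcompose_mult pcompose_pCons)
qed (simp add: monom_0)

lemma mult_pred_mod_eq: "i < m \<Longrightarrow> ((m - 1) * i) mod m = (m - i) mod (m::nat)"
proof (cases i)
  case (Suc j)
  assume "i < m"
  then have "(m - 1) * i = m * j + (m - i)" using Suc by (simp add: algebra_simps diff_mult_distrib2)
  then show ?thesis by simp
qed simp

lemma add_mult_pred_mod_eq_0_iff:
  assumes "i < m" "j < (m::nat)"
  shows "(i + (m - 1) * j) mod m = 0 \<longleftrightarrow> i = j"
proof -
  have "(i + (m - 1) * j) mod m = (i + (m - j)) mod m"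
    using assms(2) by (metis mod_add_right_eq mult_pred_mod_eq)
  moreover have "(i + (m - j)) mod m = (if j \<le> i then i - j else i + (m - j))"
    using assms by (auto simp: le_add_diff_inverse mod_if)
  ultimately show ?thesis using assms by auto
qed

lemma inner_append:
  assumes "length A = m" "length B = m" "length C = m" "length D = m"
  shows "(\<Sum>i<2 * m. (A @ B) ! i * (C @ D) ! i) = (\<Sum>i<m. A ! i * C ! i) + (\<Sum>i<m. B ! i * D ! i)"
proof -
  have halves: "{..<2 * m} = {..<m} \<union> {m..<m + m}" by auto
  have "(\<Sum>i<2 * m. (A @ B) ! i * (C @ D) ! i) =
      (\<Sum>i<m. (A @ B) ! i * (C @ D) ! i) + (\<Sum>i\<in>{m..<m + m}. (A @ B) ! i * (C @ D) ! i)"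
    unfolding halves by (rule sum.union_disjoint) auto
  also have "(\<Sum>i<m. (A @ B) ! i * (C @ D) ! i) = (\<Sum>i<m. A ! i * C ! i)"
    using assms by (intro sum.cong) (auto simp: nth_append)
  also have "(\<Sum>i\<in>{m..<m + m}. (A @ B) ! i * (C @ D) ! i)
      = (\<Sum>i\<in>{0..<m}. (A @ B) ! (i + m) * (C @ D) ! (i + m))"
    using sum.shift_bounds_nat_ivl[of "\<lambda>i. (A @ B) ! i * (C @ D) ! i" 0 m m] by simp
  also have "\<dots> = (\<Sum>i<m. B ! i * D ! i)"
    using assms by (intro sum.cong) (auto simp: nth_append)
  finally show ?thesis .
qed

locale qc_ring = subfield F for F :: "'e::field set" +
  fixes m :: nat
  assumes m_pos: "0 < m"
begin

abbreviation X where "X \<equiv> (xm1 m :: 'e poly)"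

lemma degree_xm1: "degree X = m"
proof -
  have "degree (monom (1::'e) m + (- 1)) = m"
    using m_pos by (subst degree_add_eq_left) (auto simp: degree_monom_eq)
  then show ?thesis by (simp add: xm1_def)
qed

lemma xm1_nonzero: "X \<noteq> 0"
  using degree_xm1 m_pos by auto

lemma xm1_dvd_monom_mult: "X dvd monom 1 (m * k) - 1"
  using dvd_power_minus_one[of "monom (1::'e) m" k] by (simp add: xm1_def monom_power)

lemma monom_cong_mod: "[monom c n = monom c (n mod m)] (mod X)"
proof -
  have "monom c n - monom c (n mod m) = monom c (n mod m) * (monom 1 (m * (n div m)) - 1)"
    by (subst (1) div_mult_mod_eq[of n m, symmetric]) (simp add: algebra_simps mult_monom)
  then show ?thesis by (simp add: cong_iff_dvd_diff xm1_dvd_monom_mult)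
qed

lemma mod_xm1_eq_self: "degree k < m \<Longrightarrow> k mod X = k"
  by (rule mod_poly_less) (simp add: degree_xm1)

lemma degree_mod_xm1: "degree (k mod X) < m"
  using degree_mod_less[OF xm1_nonzero, of k] degree_xm1 m_pos by auto

lemma monom_mod_xm1: "monom c n mod X = monom c (n mod m)"
  using monom_cong_mod[of c n] mod_xm1_eq_self[of "monom c (n mod m)"] m_pos
  by (metis cong_def degree_monom_le le_less_trans mod_less_divisor)

lemma coeff_mod_xm1: "coeff (k mod X) i = (\<Sum>n\<le>degree k. if n mod m = i then coeff k n else 0)"
proof -
  define r where "r = (\<Sum>n\<le>degree k. monom (coeff k n) (n mod m))"
  have "[k = r] (mod X)"
    unfolding r_def by (subst (1) poly_as_sum_of_monoms[symmetric]) (intro cong_sum monom_cong_mod)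
  moreover have "degree r < m"
    unfolding r_def using m_pos
    by (intro degree_sum_less) (metis degree_monom_le le_less_trans mod_less_divisor)
  ultimately have "k mod X = r"
    by (metis cong_def mod_xm1_eq_self)
  then show ?thesis by (simp add: r_def coeff_sum coeff_monom)
qed

lemma poly_over_mod_xm1: "poly_over F k \<Longrightarrow> poly_over F (k mod X)"
  unfolding poly_over_def coeff_mod_xm1 by (auto intro!: sum_mem zero_mem)

lemma mod_xm1_as_sum: "k mod X = (\<Sum>i<m. monom (coeff (k mod X) i) i)"
proof -
  have "{..m - 1} = {..<m}" using m_pos by auto
  moreover have "(\<Sum>i\<le>m - 1. monom (coeff (k mod X) i) i) = k mod X"
    using degree_mod_xm1[of k] by (intro poly_as_sum_of_monoms') auto
  ultimately show ?thesis by simp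
qed


text \<open>Since x^(m-1) inverts x modulo x^m - 1, recip k represents k(x^-1) in the quotient ring.\<close>
definition recip :: "'e poly \<Rightarrow> 'e poly" where
  "recip k = pcompose k (monom 1 (m - 1))"

lemma recip_monom: "recip (monom c n) = monom c ((m - 1) * n)"
  by (simp add: recip_def pcompose_monom monom_power smult_monom mult.commute)

lemma recip_add: "recip (a + b) = recip a + recip b"
  and recip_diff: "recip (a - b) = recip a - recip b"
  and recip_uminus: "recip (- a) = - recip a"
  and recip_mult: "recip (a * b) = recip a * recip b"
  and recip_prod: "recip (prod f A) = (\<Prod>i\<in>A. recip (f i))"
  and recip_sum: "recip (sum f A) = (\<Sum>i\<in>A. recip (f i))"
  by (simp_all add: recip_def pcompose_add pcompose_diff pcompose_uminus pcompose_mult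
      pcompose_prod pcompose_sum)

lemma recip_1: "recip 1 = 1"
  by (simp add: recip_def pcompose_1)

lemma recip_power: "recip (a ^ n) = recip a ^ n"
  by (induction n) (simp_all add: recip_mult recip_1)

lemmas recip_simps = recip_add recip_diff recip_uminus recip_mult recip_prod recip_power

lemma poly_over_recip: "poly_over F k \<Longrightarrow> poly_over F (recip k)"
  unfolding recip_def by (intro poly_over_pcompose poly_over_monom one_mem)

lemma pcompose_cong: "[y = y'] (mod X) \<Longrightarrow> [pcompose k y = pcompose k y'] (mod X)"
  by (induction k) (simp_all add: pcompose_pCons cong_add cong_mult)

lemma recip_cong: "[a = b] (mod X) \<Longrightarrow> [recip a = recip b] (mod X)"
proof -
  assume "[a = b] (mod X)"
  then obtain c where "a - b = X * c" by (auto simp: cong_iff_dvd_diff elim: dvdE)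
  then have "recip a - recip b = recip X * recip c" by (metis recip_diff recip_mult)
  moreover have "recip X = monom 1 (m * (m - 1)) - 1"
    by (simp add: xm1_def recip_diff recip_monom recip_1 mult.commute)
  ultimately show ?thesis using xm1_dvd_monom_mult by (simp add: cong_iff_dvd_diff)
qed

lemma recip_recip_cong: "[recip (recip k) = k] (mod X)"
proof -
  have "recip (recip k) = pcompose k (recip (monom 1 (m - 1)))"
    by (simp add: recip_def pcompose_assoc)
  also have "\<dots> = pcompose k (monom 1 ((m - 1) * (m - 1)))"
    by (simp add: recip_monom)
  also have "[\<dots> = pcompose k (monom 1 (((m - 1) * (m - 1)) mod m))] (mod X)"
    by (intro pcompose_cong monom_cong_mod)
  also have "((m - 1) * (m - 1)) mod m = 1 mod m"
    using mult_pred_mod_eq[of "m - 1" m] m_pos by (cases "m = 1") auto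
  also have "[pcompose k (monom 1 (1 mod m)) = pcompose k (monom 1 1)] (mod X)"
    by (intro pcompose_cong cong_sym[OF monom_cong_mod])
  finally show ?thesis by (simp add: monom_altdef)
qed

lemma conjbar_cong_recip: "[conjbar m k = recip k] (mod X)"
proof -
  define a where "a i = coeff (k mod X) i" for i
  have "conjbar m k = (\<Sum>i<m. monom (a i) (((m - 1) * i) mod m))"
    unfolding conjbar_def a_def by (intro sum.cong refl) (simp add: mult_pred_mod_eq[simplified])
  also have "[\<dots> = (\<Sum>i<m. monom (a i) ((m - 1) * i))] (mod X)"
    by (intro cong_sum cong_sym[OF monom_cong_mod])
  also have "(\<Sum>i<m. monom (a i) ((m - 1) * i)) = recip (\<Sum>i<m. monom (a i) i)"
    by (simp add: recip_sum recip_monom)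
  also have "(\<Sum>i<m. monom (a i) i) = k mod X"
    unfolding a_def by (rule mod_xm1_as_sum[symmetric])
  also have "[recip (k mod X) = recip k] (mod X)"
    by (intro recip_cong) simp
  finally show ?thesis .
qed

lemma recip_conjbar_cong: "[recip (conjbar m k) = k] (mod X)"
  using cong_trans[OF recip_cong[OF conjbar_cong_recip] recip_recip_cong] .

definition const_term :: "'e poly \<Rightarrow> 'e" where
  "const_term k = coeff (k mod X) 0"

lemma const_term_cong: "[a = b] (mod X) \<Longrightarrow> const_term a = const_term b"
  by (simp add: const_term_def cong_def)

lemma const_term_cong_0: "[a = 0] (mod X) \<Longrightarrow> const_term a = 0"
  by (simp add: const_term_def cong_def)

lemma const_term_add: "const_term (a + b) = const_term a + const_term b"
  by (simp add: const_term_def poly_mod_add_left)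

lemma const_term_sum: "const_term (sum f A) = (\<Sum>i\<in>A. const_term (f i))"
  by (induction A rule: infinite_finite_induct) (simp_all add: const_term_add const_term_def[of 0])

lemma const_term_monom: "const_term (monom c n) = (if n mod m = 0 then c else 0)"
  by (simp add: const_term_def monom_mod_xm1 coeff_monom)

lemma inner_coeffs_eq_const_term:
  "(\<Sum>i<m. coeff (a mod X) i * coeff (c mod X) i) = const_term (a * recip c)"
proof -
  define A where "A i = coeff (a mod X) i" for i
  define C where "C i = coeff (c mod X) i" for i
  have "[a * recip c = (a mod X) * recip (c mod X)] (mod X)"
    by (intro cong_mult recip_cong) simp_all
  then have "const_term (a * recip c) = const_term ((a mod X) * recip (c mod X))"
    by (rule const_term_cong)
  also have "(a mod X) * recip (c mod X) = (\<Sum>i<m. \<Sum>j<m. monom (A i * C j) (i + (m - 1) * j))"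
    by (subst (1 2) mod_xm1_as_sum)
      (simp add: A_def C_def recip_sum recip_monom sum_product mult_monom)
  also have "const_term \<dots> = (\<Sum>i<m. \<Sum>j<m. if (i + (m - 1) * j) mod m = 0 then A i * C j else 0)"
    by (simp add: const_term_sum const_term_monom)
  also have "\<dots> = (\<Sum>i<m. \<Sum>j<m. if i = j then A i * C j else 0)"
    by (intro sum.cong refl) (simp add: add_mult_pred_mod_eq_0_iff[simplified])
  finally show ?thesis by (simp add: A_def C_def)
qed


lemma xm1_dvd_if_const_terms_vanish:
  assumes "\<And>j. j < m \<Longrightarrow> const_term (k * recip (monom 1 j)) = 0"
  shows "X dvd k"
proof -
  have "coeff (k mod X) j = 0" for j
  proof (cases "j < m")
    case True
    have "coeff (k mod X) j = (\<Sum>i<m. coeff (k mod X) i * coeff (monom 1 j mod X) i)"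
      using True by (simp add: monom_mod_xm1 coeff_monom if_distrib[of "\<lambda>x. _ * x"] cong: if_cong)
    also have "\<dots> = 0"
      using assms[OF True] by (simp add: inner_coeffs_eq_const_term)
    finally show ?thesis .
  qed (use degree_mod_xm1[of k] in \<open>simp add: coeff_eq_0\<close>)
  then show ?thesis by (simp add: poly_eq_iff mod_eq_0_iff_dvd[symmetric])
qed

lemma length_vecR [simp]: "length (vecR m k) = m"
  by (simp add: vecR_def)

lemma nth_vecR: "i < m \<Longrightarrow> vecR m k ! i = coeff (k mod X) i"
  by (simp add: vecR_def)

lemma vecR_cong: "[a = b] (mod X) \<Longrightarrow> vecR m a = vecR m b"
  by (simp add: vecR_def cong_def)

lemma set_vecR_subset: "poly_over F k \<Longrightarrow> set (vecR m k) \<subseteq> F"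
  using poly_over_mod_xm1[of k] by (auto simp: vecR_def poly_over_def)

lemma poly_over_conjbar: "poly_over F k \<Longrightarrow> poly_over F (conjbar m k)"
  unfolding conjbar_def using poly_over_mod_xm1[of k]
  by (intro poly_over_sum poly_over_monom) (auto simp: poly_over_def)

definition poly_of_vec :: "'e list \<Rightarrow> 'e poly" where
  "poly_of_vec w = (\<Sum>i<m. monom (w ! i) i)"

lemma coeff_poly_of_vec: "coeff (poly_of_vec w) i = (if i < m then w ! i else 0)"
  by (simp add: poly_of_vec_def coeff_sum coeff_monom)

lemma degree_poly_of_vec: "degree (poly_of_vec w) < m"
  unfolding poly_of_vec_def using m_pos
  by (intro degree_sum_less) (auto intro: le_less_trans[OF degree_monom_le])

lemma vecR_poly_of_vec: "length w = m \<Longrightarrow> vecR m (poly_of_vec w) = w"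
  by (intro nth_equalityI)
    (simp_all add: nth_vecR mod_xm1_eq_self degree_poly_of_vec coeff_poly_of_vec)

lemma poly_over_poly_of_vec: "set w \<subseteq> F \<Longrightarrow> length w = m \<Longrightarrow> poly_over F (poly_of_vec w)"
  by (auto simp: poly_over_def coeff_poly_of_vec zero_mem)

lemma poly_of_vec_vecR: "degree k < m \<Longrightarrow> poly_of_vec (vecR m k) = k"
  by (rule poly_eqI) (auto simp: coeff_poly_of_vec nth_vecR mod_xm1_eq_self coeff_eq_0)


lemma inner_vecR_append:
  "(\<Sum>i<2 * m. (vecR m a @ vecR m b) ! i * (vecR m c @ vecR m d) ! i)
     = const_term (a * recip c + b * recip d)"
  by (simp add: inner_append nth_vecR inner_coeffs_eq_const_term const_term_add)

text \<open>Multiplication by a non-zero-divisor permutes the finitely many residues over F.\<close>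
lemma exists_inverse_mod_xm1:
  assumes fin: "finite F" and w: "poly_over F w" and cancel: "\<And>r. X dvd r * w \<Longrightarrow> X dvd r"
  shows "\<exists>z. poly_over F z \<and> [z * w = 1] (mod X)"
proof -
  define S where "S = {k. poly_over F k \<and> degree k < m}"
  have "S \<subseteq> poly_of_vec ` {xs. set xs \<subseteq> F \<and> length xs = m}"
  proof
    fix k assume "k \<in> S"
    then have "k = poly_of_vec (vecR m k)" "set (vecR m k) \<subseteq> F"
      by (simp_all add: S_def poly_of_vec_vecR set_vecR_subset)
    then show "k \<in> poly_of_vec ` {xs. set xs \<subseteq> F \<and> length xs = m}"
      by (intro image_eqI[of k poly_of_vec "vecR m k"]) simp_all
  qed
  moreover have "finite {xs. set xs \<subseteq> F \<and> length xs = m}"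
    using fin by (rule finite_lists_length_eq)
  ultimately have "finite S"
    by (meson finite_imageI finite_subset)
  define \<rho> where "\<rho> r = (r * w) mod X" for r
  have "\<rho> ` S \<subseteq> S"
    unfolding S_def \<rho>_def using w by (auto intro!: poly_over_mod_xm1 poly_over_mult degree_mod_xm1)
  moreover have "inj_on \<rho> S"
  proof
    fix r r' assume "r \<in> S" "r' \<in> S" "\<rho> r = \<rho> r'"
    then have "X dvd (r - r') * w"
      by (simp add: \<rho>_def mod_eq_dvd_iff left_diff_distrib)
    then have "X dvd r - r'"
      by (rule cancel)
    then have "r mod X = r' mod X"
      by (simp add: mod_eq_dvd_iff)
    with \<open>r \<in> S\<close> \<open>r' \<in> S\<close> show "r = r'"
      by (simp add: S_def mod_xm1_eq_self)
  qed
  ultimately have "\<rho> ` S = S"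
    using \<open>finite S\<close> by (intro card_subset_eq) (simp_all add: card_image)
  moreover have "1 \<in> S" using poly_over_1 m_pos by (simp add: S_def)
  ultimately obtain z where "z \<in> S" "(z * w) mod X = 1"
    unfolding \<rho>_def by force
  moreover have "1 mod X = 1"
    using m_pos by (simp add: mod_xm1_eq_self)
  ultimately show ?thesis
    by (auto simp: S_def cong_def)
qed

end

section \<open>The dual of a two-generator quasi-cyclic code\<close>

text \<open>The theorem for any factorisations x^m - 1 = g1 H1 = g2 H2 in which h_i agrees with
  the reciprocal of H_i up to units of the quotient ring; the k_i record that g1 | g2 | h1, h2.\<close>
locale qc_code_pair = qc_ring F m for F :: "'e::field set" and m +
  fixes g1 g2 h1 h2 H1 H2 k0 k1 k2 w1 w2 v1 v2 e :: "'e poly"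
  assumes poly_over: "poly_over F h1" "poly_over F h2" "poly_over F H1" "poly_over F H2"
      "poly_over F k0" "poly_over F k1" "poly_over F k2" "poly_over F w1" "poly_over F w2"
      "poly_over F v1" "poly_over F v2" "poly_over F e"
    and xm1_eq: "X = g1 * H1" "X = g2 * H2"
    and xm1_dvd_recip: "X dvd g1 * recip h1" "X dvd g2 * recip h2"
    and cofactor_cong: "[H1 = w1 * recip h1] (mod X)" "[H2 = w2 * recip h2] (mod X)"
    and generator_factors: "g2 = g1 * k0" "h1 = g2 * k1" "h2 = g2 * k2"
    and e_inverse: "[e * (1 - v1 * v2) = 1] (mod X)"
begin

abbreviation C :: "'e list set" where
  "C \<equiv> qc_code F m g1 (v1 * g1) (v2 * g2) g2"

abbreviation D :: "'e list set" where
  "D \<equiv> qc_code F m h1 (- conjbar m v2 * h1) (- conjbar m v1 * h2) h2"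

lemma D_subset_dual: "D \<subseteq> euclid_dual F (2 * m) C"
proof
  fix x assume "x \<in> D"
  then obtain a b where ab: "poly_over F a" "poly_over F b"
    and x: "x = vecR m (a * h1 + b * (- conjbar m v1 * h2)) @ vecR m (a * (- conjbar m v2 * h1) + b * h2)"
    unfolding qc_code_def by blast
  have recip_c: "[recip (a * h1 + b * (- conjbar m v1 * h2))
      = recip a * recip h1 - recip b * v1 * recip h2] (mod X)"
  proof -
    have "[recip (a * h1 + b * (- conjbar m v1 * h2))
        = recip a * recip h1 + recip b * (- v1 * recip h2)] (mod X)"
      unfolding recip_simps by (intro cong_add cong_mult cong_uminus cong_refl recip_conjbar_cong)
    then show ?thesis by (simp add: algebra_simps)
  qed
  have recip_d: "[recip (a * (- conjbar m v2 * h1) + b * h2)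
      = - recip a * v2 * recip h1 + recip b * recip h2] (mod X)"
  proof -
    have "[recip (a * (- conjbar m v2 * h1) + b * h2)
        = recip a * (- v2 * recip h1) + recip b * recip h2] (mod X)"
      unfolding recip_simps by (intro cong_add cong_mult cong_uminus cong_refl recip_conjbar_cong)
    then show ?thesis by (simp add: algebra_simps)
  qed
  have "(\<Sum>i<2 * m. y ! i * x ! i) = 0" if "y \<in> C" for y
  proof -
    obtain r1 r2 where y: "y = vecR m (r1 * g1 + r2 * (v2 * g2)) @ vecR m (r1 * (v1 * g1) + r2 * g2)"
      using \<open>y \<in> C\<close> unfolding qc_code_def by blast
    have "[(r1 * g1 + r2 * (v2 * g2)) * recip (a * h1 + b * (- conjbar m v1 * h2))
          + (r1 * (v1 * g1) + r2 * g2) * recip (a * (- conjbar m v2 * h1) + b * h2)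
        = (r1 * g1 + r2 * (v2 * g2)) * (recip a * recip h1 - recip b * v1 * recip h2)
          + (r1 * (v1 * g1) + r2 * g2) * (- recip a * v2 * recip h1 + recip b * recip h2)] (mod X)"
      by (intro cong_add cong_mult cong_refl recip_c recip_d)
    also have "(r1 * g1 + r2 * (v2 * g2)) * (recip a * recip h1 - recip b * v1 * recip h2)
          + (r1 * (v1 * g1) + r2 * g2) * (- recip a * v2 * recip h1 + recip b * recip h2)
        = (r1 * recip a * (1 - v1 * v2)) * (g1 * recip h1)
          + (r2 * recip b * (1 - v1 * v2)) * (g2 * recip h2)"
      by (simp add: algebra_simps)
    also have "[\<dots> = 0] (mod X)"
      using xm1_dvd_recip by (simp add: cong_0_iff)
    finally show ?thesis
      unfolding x y inner_vecR_append by (rule const_term_cong_0)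
  qed
  moreover have "set x \<subseteq> F"
    unfolding x using ab poly_over
    by (auto intro!: set_vecR_subset poly_over_intros poly_over_conjbar)
  ultimately show "x \<in> euclid_dual F (2 * m) C"
    by (simp add: euclid_dual_def x)
qed

text \<open>Every codeword of D is reached by C with the coefficients rho1, rho2 below; the
  unit e undoes the factor 1 - v1 v2 created by the generator matrix of C.\<close>
lemma D_subset_C: "D \<subseteq> C"
proof
  fix x assume "x \<in> D"
  then obtain a b where ab: "poly_over F a" "poly_over F b"
    and x: "x = vecR m (a * h1 + b * (- conjbar m v1 * h2)) @ vecR m (a * (- conjbar m v2 * h1) + b * h2)"
    unfolding qc_code_def by blast
  define y1 where "y1 = a * k1 - b * conjbar m v1 * k2"
  define y2 where "y2 = - a * conjbar m v2 * k1 + b * k2"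
  define \<rho>2 where "\<rho>2 = e * (y2 - v1 * y1)"
  define \<rho>1 where "\<rho>1 = k0 * (y1 - \<rho>2 * v2)"
  have "poly_over F \<rho>1" "poly_over F \<rho>2"
    unfolding \<rho>1_def \<rho>2_def y1_def y2_def using ab poly_over
    by (auto intro!: poly_over_intros poly_over_conjbar)
  moreover have "\<rho>1 * g1 + \<rho>2 * (v2 * g2) = a * h1 + b * (- conjbar m v1 * h2)"
    unfolding \<rho>1_def generator_factors y1_def by (simp add: algebra_simps)
  moreover have "[\<rho>1 * (v1 * g1) + \<rho>2 * g2 = a * (- conjbar m v2 * h1) + b * h2] (mod X)"
  proof -
    have "\<rho>1 * (v1 * g1) + \<rho>2 * g2 = g2 * (v1 * y1 + (e * (1 - v1 * v2)) * (y2 - v1 * y1))"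
      unfolding \<rho>1_def \<rho>2_def generator_factors(1) by (simp add: algebra_simps)
    also have "[\<dots> = g2 * (v1 * y1 + 1 * (y2 - v1 * y1))] (mod X)"
      by (intro cong_mult cong_add cong_refl e_inverse)
    also have "g2 * (v1 * y1 + 1 * (y2 - v1 * y1)) = a * (- conjbar m v2 * h1) + b * h2"
      unfolding y2_def generator_factors by (simp add: algebra_simps)
    finally show ?thesis .
  qed
  ultimately show "x \<in> C"
    unfolding x qc_code_def by (metis (mono_tags, lifting) mem_Collect_eq vecR_cong)
qed

lemma orthogonal_imp_xm1_dvd:
  assumes "vecR m c @ vecR m d \<in> euclid_dual F (2 * m) C"
  shows "X dvd g1 * (recip c + v1 * recip d)" and "X dvd g2 * (v2 * recip c + recip d)"
proof -
  have orth: "const_term ((r1 * g1 + r2 * (v2 * g2)) * recip c + (r1 * (v1 * g1) + r2 * g2) * recip d) = 0"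
    if "poly_over F r1" "poly_over F r2" for r1 r2
  proof -
    have "vecR m (r1 * g1 + r2 * (v2 * g2)) @ vecR m (r1 * (v1 * g1) + r2 * g2) \<in> C"
      unfolding qc_code_def using that by blast
    with assms show ?thesis
      unfolding euclid_dual_def by (auto simp flip: inner_vecR_append)
  qed
  show "X dvd g1 * (recip c + v1 * recip d)"
  proof (rule xm1_dvd_if_const_terms_vanish)
    fix j
    show "const_term (g1 * (recip c + v1 * recip d) * recip (monom 1 j)) = 0"
      using orth[OF poly_over_recip[OF poly_over_monom[OF one_mem]] poly_over_0]
      by (simp add: algebra_simps)
  qed
  show "X dvd g2 * (v2 * recip c + recip d)"
  proof (rule xm1_dvd_if_const_terms_vanish)
    fix j
    show "const_term (g2 * (v2 * recip c + recip d) * recip (monom 1 j)) = 0"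
      using orth[OF poly_over_0 poly_over_recip[OF poly_over_monom[OF one_mem]]]
      by (simp add: algebra_simps)
  qed
qed

lemma recip_cofactor_cong: "[recip H1 = recip w1 * h1] (mod X)" "[recip H2 = recip w2 * h2] (mod X)"
proof -
  have "[recip H1 = recip w1 * recip (recip h1)] (mod X)"
    using recip_cong[OF cofactor_cong(1)] by (simp add: recip_mult)
  also have "[recip w1 * recip (recip h1) = recip w1 * h1] (mod X)"
    by (intro cong_mult cong_refl recip_recip_cong)
  finally show "[recip H1 = recip w1 * h1] (mod X)" .
  have "[recip H2 = recip w2 * recip (recip h2)] (mod X)"
    using recip_cong[OF cofactor_cong(2)] by (simp add: recip_mult)
  also have "[recip w2 * recip (recip h2) = recip w2 * h2] (mod X)"
    by (intro cong_mult cong_refl recip_recip_cong)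
  finally show "[recip H2 = recip w2 * h2] (mod X)" .
qed

text \<open>For x = [c] @ [d] in the dual, U = recip c + v1 recip d is divisible by H1 and
  W = v2 recip c + recip d by H2; inverting the matrix ((1, v1), (v2, 1)) with e and applying
  recip once more expresses c and d through h1 and h2.\<close>
lemma dual_subset_D: "euclid_dual F (2 * m) C \<subseteq> D"
proof
  fix x assume x_dual: "x \<in> euclid_dual F (2 * m) C"
  define c where "c = poly_of_vec (take m x)"
  define d where "d = poly_of_vec (drop m x)"
  have "length x = 2 * m" "set x \<subseteq> F"
    using x_dual by (simp_all add: euclid_dual_def)
  then have cd: "poly_over F c" "poly_over F d" and x: "x = vecR m c @ vecR m d"
    unfolding c_def d_def
    by (auto intro!: poly_over_poly_of_vec simp: vecR_poly_of_vec dest: in_set_takeD in_set_dropD)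
  define U where "U = recip c + v1 * recip d"
  define W where "W = v2 * recip c + recip d"
  have UW: "poly_over F U" "poly_over F W"
    unfolding U_def W_def using cd poly_over by (auto intro!: poly_over_intros poly_over_recip)
  have "g1 * H1 dvd g1 * U" "g2 * H2 dvd g2 * W"
    using orthogonal_imp_xm1_dvd x_dual xm1_eq unfolding x U_def W_def by simp_all
  moreover have "g1 \<noteq> 0" "g2 \<noteq> 0" "H1 \<noteq> 0" "H2 \<noteq> 0"
    using xm1_nonzero xm1_eq by auto
  ultimately obtain \<alpha> \<beta> where \<alpha>: "U = H1 * \<alpha>" and \<beta>: "W = H2 * \<beta>"
    by (auto elim!: dvdE)
  have \<alpha>\<beta>: "poly_over F \<alpha>" "poly_over F \<beta>"
    using poly_over_dvd_quotient UW poly_over \<alpha> \<beta> \<open>H1 \<noteq> 0\<close> \<open>H2 \<noteq> 0\<close> by blast+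
  define a where "a = recip e * recip w1 * recip \<alpha>"
  define b where "b = recip e * recip w2 * recip \<beta>"
  have "poly_over F a" "poly_over F b"
    unfolding a_def b_def using poly_over \<alpha>\<beta> by (auto intro!: poly_over_intros poly_over_recip)
  have recip_c: "[recip c = e * (H1 * \<alpha> - v1 * (H2 * \<beta>))] (mod X)"
  proof -
    have "[recip c = (e * (1 - v1 * v2)) * recip c] (mod X)"
      using cong_scalar_right[OF cong_sym[OF e_inverse], of "recip c"] by simp
    then show ?thesis
      by (simp add: \<alpha>[symmetric] \<beta>[symmetric] U_def W_def algebra_simps)
  qed
  have recip_d: "[recip d = e * (H2 * \<beta> - v2 * (H1 * \<alpha>))] (mod X)"
  proof -
    have "[recip d = (e * (1 - v1 * v2)) * recip d] (mod X)"
      using cong_scalar_right[OF cong_sym[OF e_inverse], of "recip d"] by simp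
    then show ?thesis
      by (simp add: \<alpha>[symmetric] \<beta>[symmetric] U_def W_def algebra_simps)
  qed
  have "[c = recip (recip c)] (mod X)"
    by (rule cong_sym[OF recip_recip_cong])
  also have "[recip (recip c) = recip e * (recip H1 * recip \<alpha> - recip v1 * (recip H2 * recip \<beta>))] (mod X)"
    using recip_cong[OF recip_c] by (simp add: recip_mult recip_diff)
  also have "[recip e * (recip H1 * recip \<alpha> - recip v1 * (recip H2 * recip \<beta>))
      = recip e * ((recip w1 * h1) * recip \<alpha> - conjbar m v1 * ((recip w2 * h2) * recip \<beta>))] (mod X)"
    by (intro cong_mult cong_diff cong_refl recip_cofactor_cong cong_sym[OF conjbar_cong_recip])
  also have "recip e * ((recip w1 * h1) * recip \<alpha> - conjbar m v1 * ((recip w2 * h2) * recip \<beta>))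
      = a * h1 + b * (- conjbar m v1 * h2)"
    unfolding a_def b_def by (simp add: algebra_simps)
  finally have c_eq: "[c = a * h1 + b * (- conjbar m v1 * h2)] (mod X)" .
  have "[d = recip (recip d)] (mod X)"
    by (rule cong_sym[OF recip_recip_cong])
  also have "[recip (recip d) = recip e * (recip H2 * recip \<beta> - recip v2 * (recip H1 * recip \<alpha>))] (mod X)"
    using recip_cong[OF recip_d] by (simp add: recip_mult recip_diff)
  also have "[recip e * (recip H2 * recip \<beta> - recip v2 * (recip H1 * recip \<alpha>))
      = recip e * ((recip w2 * h2) * recip \<beta> - conjbar m v2 * ((recip w1 * h1) * recip \<alpha>))] (mod X)"
    by (intro cong_mult cong_diff cong_refl recip_cofactor_cong cong_sym[OF conjbar_cong_recip])
  also have "recip e * ((recip w2 * h2) * recip \<beta> - conjbar m v2 * ((recip w1 * h1) * recip \<alpha>))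
      = a * (- conjbar m v2 * h1) + b * h2"
    unfolding a_def b_def by (simp add: algebra_simps)
  finally have d_eq: "[d = a * (- conjbar m v2 * h1) + b * h2] (mod X)" .
  show "x \<in> D"
    unfolding qc_code_def x vecR_cong[OF c_eq] vecR_cong[OF d_eq]
    using \<open>poly_over F a\<close> \<open>poly_over F b\<close> by blast
qed

theorem dual_qc_code_pair: "euclid_dual F (2 * m) C = D \<and> euclid_dual F (2 * m) C \<subseteq> C"
  using D_subset_dual dual_subset_D D_subset_C by blast

end

section \<open>Finite subfields and cyclotomic cosets\<close>

lemma coeff_prod_linear_hom:
  fixes \<phi> :: "'e::field \<Rightarrow> 'e"
  assumes add: "\<And>x y. \<phi> (x + y) = \<phi> x + \<phi> y" and mult: "\<And>x y. \<phi> (x * y) = \<phi> x * \<phi> y"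
    and uminus: "\<And>x. \<phi> (- x) = - \<phi> x" and "\<phi> 0 = 0" and "\<phi> 1 = 1" and "finite A"
  shows "coeff (\<Prod>i\<in>A. [:- \<phi> (\<beta> i), 1:]) k = \<phi> (coeff (\<Prod>i\<in>A. [:- \<beta> i, 1:]) k)"
  using \<open>finite A\<close>
proof (induction A arbitrary: k rule: finite_induct)
  case empty
  then show ?case by (cases k) (simp_all add: assms(4,5))
next
  case (insert x A)
  have coeff_linear_mult:
    "coeff ([:a, 1:] * p) k = a * coeff p k + (case k of 0 \<Rightarrow> 0 | Suc j \<Rightarrow> coeff p j)"
    for a :: 'e and p :: "'e poly"
    by (simp add: mult_pCons_left coeff_pCons split: nat.split)
  have diff: "\<phi> (a - b) = \<phi> a - \<phi> b" for a b
    using add[of a "- b"] uminus[of b] by simp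
  let ?R = "\<Prod>i\<in>A. [:- \<beta> i, 1:]" and ?R' = "\<Prod>i\<in>A. [:- \<phi> (\<beta> i), 1:]"
  have "coeff (\<Prod>i\<in>insert x A. [:- \<phi> (\<beta> i), 1:]) k = coeff ([:- \<phi> (\<beta> x), 1:] * ?R') k"
    using insert by simp
  also have "\<dots> = - \<phi> (\<beta> x) * coeff ?R' k + (case k of 0 \<Rightarrow> 0 | Suc j \<Rightarrow> coeff ?R' j)"
    by (rule coeff_linear_mult)
  also have "\<dots> = \<phi> (- \<beta> x * coeff ?R k + (case k of 0 \<Rightarrow> 0 | Suc j \<Rightarrow> coeff ?R j))"
    using insert.IH by (simp add: add diff mult uminus assms(4) split: nat.split)
  also have "- \<beta> x * coeff ?R k + (case k of 0 \<Rightarrow> 0 | Suc j \<Rightarrow> coeff ?R j) = coeff ([:- \<beta> x, 1:] * ?R) k"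
    by (rule coeff_linear_mult[symmetric])
  finally show ?case
    using insert by simp
qed

locale finite_subfield = subfield F for F :: "'e::field set" +
  fixes q :: nat
  assumes finite: "finite F" and q_card: "q = card F"
begin

lemma q_ge_2: "q \<ge> 2"
proof -
  have "card {0::'e, 1} \<le> card F"
    using zero_mem one_mem finite by (intro card_mono) auto
  then show ?thesis using q_card by simp
qed

lemma power_q_eq: "a \<in> F \<Longrightarrow> a ^ q = a"
proof (cases "a = 0")
  case False
  assume "a \<in> F"
  define G where "G = F - {0}"
  have "bij_betw (\<lambda>b. a * b) G G"
    by (rule bij_betwI[where g = "\<lambda>b. inverse a * b"])
      (use \<open>a \<in> F\<close> False in \<open>auto simp: G_def mult_mem inverse_mem\<close>)
  then have "(\<Prod>b\<in>G. a * b) = (\<Prod>b\<in>G. b)"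
    by (rule prod.reindex_bij_betw)
  then have "a ^ card G * (\<Prod>b\<in>G. b) = 1 * (\<Prod>b\<in>G. b)"
    by (simp add: prod.distrib)
  moreover have "(\<Prod>b\<in>G. b) \<noteq> 0"
    using finite by (simp add: G_def)
  moreover have "card G = q - 1"
    using q_card zero_mem finite by (simp add: G_def card_Diff_singleton)
  ultimately have "a ^ (q - 1) = 1"
    by (metis mult_right_cancel)
  then show ?thesis
    using q_ge_2 by (metis Suc_diff_1 less_le_trans mult.right_neutral pos2 power_Suc)
qed (use q_ge_2 in simp)

text \<open>x^q - x has at most q roots, and every element of F is one of them.\<close>
lemma mem_if_power_q_eq: assumes "y ^ q = y" shows "y \<in> F"
proof -
  define Q :: "'e poly" where "Q = monom 1 q - [:0, 1:]"
  have "coeff [:0, 1::'e:] q = 0" using q_ge_2 by (intro coeff_eq_0) simp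
  then have "coeff Q q = 1" by (simp add: Q_def)
  then have "Q \<noteq> 0" by auto
  have "degree Q \<le> q"
    unfolding Q_def using q_ge_2 by (intro degree_diff_le) (auto intro: degree_monom_le)
  have roots: "F \<subseteq> {x. poly Q x = 0}"
    using power_q_eq by (auto simp: Q_def poly_monom)
  have "card {x. poly Q x = 0} \<le> q"
    using card_poly_roots_bound[OF \<open>Q \<noteq> 0\<close>] \<open>degree Q \<le> q\<close> by linarith
  then have "F = {x. poly Q x = 0}"
    using roots q_card poly_roots_finite[OF \<open>Q \<noteq> 0\<close>] by (metis card_seteq)
  moreover have "poly Q y = 0" using assms by (simp add: Q_def poly_monom)
  ultimately show ?thesis by blast
qed

text \<open>The polynomial (x + 1)^q - x^q - 1 has degree below q and vanishes on all of F.\<close>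
lemma binomial_q_eq_0: assumes "0 < j" "j < q" shows "(of_nat (q choose j) :: 'e) = 0"
proof -
  define Q :: "'e poly" where "Q = [:1, 1:] ^ q - monom 1 q - 1"
  have coeff_Q: "coeff Q k = (if k \<le> q then of_nat (q choose k) else 0)
      - (if k = q then 1 else 0) - (if k = 0 then 1 else 0)" for k
  proof (cases "k \<le> q")
    case False
    have "degree ([:1, 1::'e:] ^ q) \<le> q"
      using degree_power_le[of "[:1, 1::'e:]" q] by simp
    with False show ?thesis by (auto simp: Q_def coeff_eq_0 coeff_1)
  qed (simp add: Q_def coeff_linear_poly_power coeff_1)
  have "Q = 0"
  proof (rule poly_eqI_degree[of F])
    fix x assume "x \<in> F"
    then have "(1 + x) ^ q = 1 + x" "x ^ q = x"
      using power_q_eq add_mem[OF one_mem] by auto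
    then show "poly Q x = poly 0 x" by (simp add: Q_def poly_monom)
  next
    have "degree Q < q"
      by (rule degree_lessI) (use q_ge_2 in \<open>auto simp: coeff_Q\<close>)
    then show "degree Q < card F" using q_card by simp
  qed (use q_card q_ge_2 in simp)
  then have "coeff Q j = 0" by simp
  with assms show ?thesis by (simp add: coeff_Q)
qed

lemma power_q_add: "(a + b) ^ q = a ^ q + (b::'e) ^ q"
proof -
  have "(a + b) ^ q = (\<Sum>k\<le>q. of_nat (q choose k) * a ^ k * b ^ (q - k))"
    by (rule binomial_ring)
  also have "\<dots> = (\<Sum>k\<le>q. (if k = q then a ^ q else 0) + (if k = 0 then b ^ q else 0))"
    using binomial_q_eq_0 q_ge_2 by (intro sum.cong refl) (fastforce simp: not_less_iff_gr_or_eq)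
  also have "\<dots> = a ^ q + b ^ q" by (simp add: sum.distrib)
  finally show ?thesis .
qed

lemma power_q_uminus: "(- a) ^ q = - ((a::'e) ^ q)"
proof -
  have "(- a) ^ q + a ^ q = (- a + a) ^ q" by (rule power_q_add[symmetric])
  also have "\<dots> = 0" using q_ge_2 by simp
  finally show ?thesis by (simp add: eq_neg_iff_add_eq_0)
qed

lemma power_q_power_inj: "y ^ (q ^ n) = z ^ (q ^ n) \<Longrightarrow> y = (z::'e)"
proof -
  have add: "(a + b) ^ (q ^ n) = a ^ (q ^ n) + b ^ (q ^ n)" for a b :: 'e
  proof (induction n)
    case (Suc n)
    have "(a + b) ^ (q ^ Suc n) = ((a + b) ^ (q ^ n)) ^ q" by (simp only: power_Suc2 power_mult)
    also have "\<dots> = (a ^ (q ^ n)) ^ q + (b ^ (q ^ n)) ^ q" by (simp add: Suc power_q_add)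
    also have "\<dots> = a ^ (q ^ Suc n) + b ^ (q ^ Suc n)" by (simp only: power_Suc2 power_mult)
    finally show ?case .
  qed simp
  assume "y ^ (q ^ n) = z ^ (q ^ n)"
  with add[of "y - z" z] have "(y - z) ^ (q ^ n) = 0" by simp
  then show ?thesis by simp
qed

lemma CHAR_prime: "prime CHAR('e)"
proof -
  have "\<not> inj_on (\<lambda>n. of_nat n :: 'e) {..q}"
  proof
    assume "inj_on (\<lambda>n. of_nat n :: 'e) {..q}"
    then have "card {..q} \<le> card F"
      using finite of_nat_mem by (intro card_inj_on_le) auto
    then show False using q_card by simp
  qed
  then obtain a b where "a < b" "(of_nat a :: 'e) = of_nat b"
    unfolding inj_on_def by (metis linorder_neqE_nat)
  then have "(of_nat (b - a) :: 'e) = 0"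
    by (simp add: of_nat_diff)
  with \<open>a < b\<close> have "CHAR('e) > 0"
    by (metis CHAR_pos_iff zero_less_diff)
  then show ?thesis by (rule prime_CHAR_semidom)
qed

end

locale cyclotomic = finite_subfield F q for F :: "'e::field set" and q +
  fixes l :: nat and \<alpha> :: 'e
  assumes l_pos: "l \<ge> 1" and root: "\<alpha> ^ l = 1"
    and primitive: "\<forall>j. 0 < j \<and> j < l \<longrightarrow> \<alpha> ^ j \<noteq> 1"
begin

lemma alpha_nonzero: "\<alpha> \<noteq> 0"
proof
  assume "\<alpha> = 0"
  then have "\<alpha> ^ l = 0" using l_pos by simp
  then show False using root by simp
qed

lemma power_alpha_mod: "\<alpha> ^ a = \<alpha> ^ (a mod l)"
proof -
  have "\<alpha> ^ a = \<alpha> ^ (l * (a div l) + a mod l)" by simp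
  also have "\<dots> = \<alpha> ^ (a mod l)" by (simp only: power_add power_mult root) simp
  finally show ?thesis .
qed

lemma power_alpha_inj_less: assumes "x < l" "y < l" "\<alpha> ^ x = \<alpha> ^ y" shows "x = y"
proof (rule ccontr)
  assume ne: "x \<noteq> y"
  have *: False if "a < b" "b < l" "\<alpha> ^ a = \<alpha> ^ b" for a b
  proof -
    have "\<alpha> ^ b = \<alpha> ^ (a + (b - a))" using that by simp
    then have "\<alpha> ^ b = \<alpha> ^ a * \<alpha> ^ (b - a)" by (simp only: power_add)
    then have "\<alpha> ^ (b - a) = 1" using that(3) alpha_nonzero by simp
    then show False using primitive that by auto
  qed
  show False using ne assms *[of x y] *[of y x] by (cases "x < y") auto
qed

lemma power_alpha_eq_iff: "\<alpha> ^ a = \<alpha> ^ b \<longleftrightarrow> a mod l = b mod l"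
proof
  assume "\<alpha> ^ a = \<alpha> ^ b"
  then have "\<alpha> ^ (a mod l) = \<alpha> ^ (b mod l)" by (simp add: power_alpha_mod[symmetric])
  then show "a mod l = b mod l" using l_pos by (intro power_alpha_inj_less) auto
next
  assume "a mod l = b mod l" then show "\<alpha> ^ a = \<alpha> ^ b" by (metis power_alpha_mod)
qed

text \<open>Holds because y \<mapsto> y^(q^n) is injective and alpha has order l.\<close>
lemma mod_cancel_power_q: "(i * q ^ n) mod l = (j * q ^ n) mod l \<Longrightarrow> i mod l = j mod l"
proof -
  assume "(i * q ^ n) mod l = (j * q ^ n) mod l"
  then have "\<alpha> ^ (i * q ^ n) = \<alpha> ^ (j * q ^ n)" by (simp add: power_alpha_eq_iff)
  then have "(\<alpha> ^ i) ^ (q ^ n) = (\<alpha> ^ j) ^ (q ^ n)" by (simp add: power_mult)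
  then have "\<alpha> ^ i = \<alpha> ^ j" by (rule power_q_power_inj)
  then show ?thesis by (simp add: power_alpha_eq_iff)
qed

abbreviation coset where "coset \<equiv> cyc_coset q l"

abbreviation reps where "reps \<equiv> cyc_reps q l"

definition neg_mod :: "nat \<Rightarrow> nat" where "neg_mod x = (l - x mod l) mod l"

lemma coset_subset_lessThan: "coset i \<subseteq> {..<l}"
  using l_pos by (auto simp: cyc_coset_def)

lemma finite_coset: "finite (coset i)" using coset_subset_lessThan finite_subset by blast

lemma mod_mem_coset: "i mod l \<in> coset i"
  unfolding cyc_coset_def by (rule CollectI, rule exI[of _ 0]) simp

lemma coset_nonempty: "coset i \<noteq> {}" using mod_mem_coset by blast

lemma coset_mod: "coset (i mod l) = coset i"
  unfolding cyc_coset_def by (simp add: mod_mult_left_eq)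

lemma coset_subset_of_mem: assumes "x \<in> coset i" shows "coset x \<subseteq> coset i"
proof
  fix y assume "y \<in> coset x"
  obtain a where a: "x = i * q ^ a mod l" using assms by (auto simp: cyc_coset_def)
  obtain b where b: "y = x * q ^ b mod l" using \<open>y \<in> coset x\<close> by (auto simp: cyc_coset_def)
  have "y = (i * q ^ a * q ^ b) mod l" by (simp add: a b mod_mult_left_eq)
  also have "i * q ^ a * q ^ b = i * q ^ (a + b)" by (simp add: power_add)
  finally show "y \<in> coset i" by (auto simp: cyc_coset_def)
qed

lemma exists_period: "\<exists>k\<ge>1. (i * q ^ k) mod l = i mod l"
proof -
  define f where "f n = (i * q ^ n) mod l" for n
  have "\<not> inj_on f {..l}"
  proof
    assume "inj_on f {..l}"
    moreover have "f ` {..l} \<subseteq> {..<l}" using l_pos by (auto simp: f_def)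
    ultimately have "card {..l} \<le> card {..<l}" by (intro card_inj_on_le) auto
    then show False by simp
  qed
  then obtain a b where ab: "a \<le> l" "b \<le> l" "a \<noteq> b" "f a = f b" unfolding inj_on_def by auto
  have *: "\<exists>k\<ge>1. (i * q ^ k) mod l = i mod l" if "a < b" "f a = f b" for a b
  proof -
    have "(i * q ^ a) mod l = ((i * q ^ (b - a)) * q ^ a) mod l"
      using that by (simp add: f_def power_add[symmetric] mult.assoc)
    then have "i mod l = (i * q ^ (b - a)) mod l" by (rule mod_cancel_power_q)
    then show ?thesis using that by (intro exI[of _ "b - a"]) auto
  qed
  show ?thesis using ab *[of a b] *[of b a] by (cases "a < b") auto
qed

lemma mem_coset_sym: assumes "x \<in> coset i" shows "i mod l \<in> coset x"
proof -
  obtain k where k: "k \<ge> 1" "(i * q ^ k) mod l = i mod l" using exists_period by blast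
  obtain a where a: "x = i * q ^ a mod l" using assms by (auto simp: cyc_coset_def)
  have pw: "(i * q ^ (k * n)) mod l = i mod l" for n
  proof (induction n)
    case 0 then show ?case by simp
  next
    case (Suc n)
    have "(i * q ^ (k * Suc n)) mod l = ((i * q ^ (k * n)) * q ^ k) mod l"
      by (simp add: power_add ac_simps)
    also have "\<dots> = (((i * q ^ (k * n)) mod l) * q ^ k) mod l" by (simp add: mod_mult_left_eq)
    also have "\<dots> = (i * q ^ k) mod l" by (simp add: Suc mod_mult_left_eq)
    finally show ?case using k by simp
  qed
  have "k * a = a + (k - 1) * a" using k by (simp add: algebra_simps)
  then have "i mod l = (i * q ^ a * q ^ ((k - 1) * a)) mod l"
    using pw[of a] by (simp add: power_add mult.assoc)
  also have "\<dots> = (x * q ^ ((k - 1) * a)) mod l" by (simp add: a mod_mult_left_eq)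
  finally show ?thesis by (auto simp: cyc_coset_def)
qed

lemma coset_eq_of_mem: assumes "x \<in> coset i" shows "coset x = coset i"
proof
  show "coset x \<subseteq> coset i" by (rule coset_subset_of_mem[OF assms])
  have "coset (i mod l) \<subseteq> coset x" by (rule coset_subset_of_mem[OF mem_coset_sym[OF assms]])
  then show "coset i \<subseteq> coset x" by (simp add: coset_mod)
qed

lemma Min_coset_mem: "Min (coset i) \<in> coset i" using finite_coset coset_nonempty by (rule Min_in)

lemma Min_coset_in_reps: "Min (coset i) \<in> reps"
proof -
  have "coset (Min (coset i)) = coset i" by (rule coset_eq_of_mem[OF Min_coset_mem])
  moreover have "Min (coset i) < l" using Min_coset_mem coset_subset_lessThan by blast
  ultimately show ?thesis by (simp add: cyc_reps_def)
qed

lemma reps_less: "s \<in> reps \<Longrightarrow> s < l" by (simp add: cyc_reps_def)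

lemma finite_reps: "finite reps"
  using reps_less by (meson finite_lessThan finite_subset lessThan_iff subsetI)

lemma UN_reps_coset: "(\<Union>s\<in>reps. coset s) = {..<l}"
proof
  show "(\<Union>s\<in>reps. coset s) \<subseteq> {..<l}" using coset_subset_lessThan by blast
  show "{..<l} \<subseteq> (\<Union>s\<in>reps. coset s)"
  proof
    fix i assume "i \<in> {..<l}"
    then have "i \<in> coset i" using mod_mem_coset[of i] by simp
    then have "i \<in> coset (Min (coset i))" using coset_eq_of_mem[OF Min_coset_mem] by simp
    then show "i \<in> (\<Union>s\<in>reps. coset s)" using Min_coset_in_reps by blast
  qed
qed

lemma reps_coset_disjoint:
  "s \<in> reps \<Longrightarrow> s' \<in> reps \<Longrightarrow> s \<noteq> s' \<Longrightarrow> coset s \<inter> coset s' = {}"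
proof (rule ccontr)
  assume a: "s \<in> reps" "s' \<in> reps" "s \<noteq> s'" "coset s \<inter> coset s' \<noteq> {}"
  then obtain x where "x \<in> coset s" "x \<in> coset s'" by blast
  then have "coset s = coset s'" using coset_eq_of_mem by metis
  then have "Min (coset s) = Min (coset s')" by simp
  then show False using a(1-3) by (simp add: cyc_reps_def)
qed

lemma neg_mod_eq: "x < l \<Longrightarrow> neg_mod x = (if x = 0 then 0 else l - x)"
  by (auto simp: neg_mod_def)

lemma neg_mod_less: "neg_mod x < l" using l_pos by (simp add: neg_mod_def)

lemma neg_mod_neg_mod: "x < l \<Longrightarrow> neg_mod (neg_mod x) = x"
  using neg_mod_less[of x] by (auto simp: neg_mod_eq)

lemma int_neg_mod: "int (neg_mod x) = (- int x) mod int l"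
proof -
  have "int (neg_mod x) = int ((l - x mod l) mod l)" by (simp add: neg_mod_def)
  also have "\<dots> = (int l - int (x mod l)) mod int l"
    using l_pos by (simp add: of_nat_mod of_nat_diff less_imp_le)
  also have "\<dots> = (- int (x mod l)) mod int l" by (simp add: mod_diff_left_eq[symmetric])
  also have "\<dots> = (- int x) mod int l" by (simp add: of_nat_mod mod_minus_eq)
  finally show ?thesis .
qed

lemma neg_mod_mult_power_q: "neg_mod ((s * q ^ j) mod l) = (neg_mod s * q ^ j) mod l"
proof -
  have "int (neg_mod ((s * q ^ j) mod l)) = (- int ((s * q ^ j) mod l)) mod int l" by (rule int_neg_mod)
  also have "\<dots> = (- (int s * int q ^ j)) mod int l" by (simp add: of_nat_mod mod_minus_eq)
  also have "\<dots> = (((- int s) mod int l) * int q ^ j) mod int l" by (simp add: mod_mult_left_eq)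
  also have "\<dots> = int ((neg_mod s * q ^ j) mod l)" by (simp add: int_neg_mod of_nat_mod)
  finally show ?thesis by simp
qed

lemma neg_mod_image_coset: "neg_mod ` coset s = coset (neg_mod s)"
proof
  show "neg_mod ` coset s \<subseteq> coset (neg_mod s)"
    unfolding cyc_coset_def by (auto simp: neg_mod_mult_power_q)
  show "coset (neg_mod s) \<subseteq> neg_mod ` coset s"
  proof
    fix y assume "y \<in> coset (neg_mod s)"
    then obtain j where "y = (neg_mod s * q ^ j) mod l" by (auto simp: cyc_coset_def)
    then have "y = neg_mod ((s * q ^ j) mod l)" by (simp add: neg_mod_mult_power_q)
    moreover have "(s * q ^ j) mod l \<in> coset s" by (auto simp: cyc_coset_def)
    ultimately show "y \<in> neg_mod ` coset s" by blast
  qed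
qed

lemma inj_on_neg_mod: "inj_on neg_mod (coset s)"
  by (rule inj_on_inverseI[where g = neg_mod]) (use coset_subset_lessThan neg_mod_neg_mod in blast)

abbreviation N where "N \<equiv> neg_rep q l"

lemma neg_rep_eq: "N s = Min (coset (neg_mod s))" by (simp add: neg_rep_def neg_mod_def)

lemma neg_rep_in_reps: "N s \<in> reps" by (simp add: neg_rep_eq Min_coset_in_reps)

lemma coset_neg_rep: "coset (N s) = coset (neg_mod s)"
  by (simp add: neg_rep_eq coset_eq_of_mem[OF Min_coset_mem])

lemma neg_rep_neg_rep: assumes "s \<in> reps" shows "N (N s) = s"
proof -
  have "N s \<in> coset (neg_mod s)" by (simp add: neg_rep_eq Min_coset_mem)
  then have "neg_mod (N s) \<in> coset (neg_mod (neg_mod s))" using neg_mod_image_coset by blast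
  then have "neg_mod (N s) \<in> coset s" using neg_mod_neg_mod reps_less[OF assms] by simp
  then have "coset (neg_mod (N s)) = coset s" by (rule coset_eq_of_mem)
  then show ?thesis using assms by (simp add: neg_rep_eq cyc_reps_def)
qed

lemma bij_betw_neg_rep: "bij_betw N reps reps"
  by (rule bij_betwI[where g = N]) (auto simp: neg_rep_in_reps neg_rep_neg_rep)

abbreviation M where "M \<equiv> Mpoly q l \<alpha>"

lemma bij_betw_times_q_coset: "bij_betw (\<lambda>i. (i * q) mod l) (coset s) (coset s)"
proof -
  have into: "(\<lambda>i. (i * q) mod l) ` coset s \<subseteq> coset s"
  proof
    fix y assume "y \<in> (\<lambda>i. (i * q) mod l) ` coset s"
    then obtain i where i: "i \<in> coset s" "y = (i * q) mod l" by auto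
    have "(i * q) mod l \<in> coset i" unfolding cyc_coset_def by (rule CollectI, rule exI[of _ 1]) simp
    then show "y \<in> coset s" using coset_subset_of_mem[OF i(1)] i(2) by blast
  qed
  have inj: "inj_on (\<lambda>i. (i * q) mod l) (coset s)"
  proof
    fix x y assume xy: "x \<in> coset s" "y \<in> coset s" "(x * q) mod l = (y * q) mod l"
    then have "x mod l = y mod l" using mod_cancel_power_q[of x 1 y] by simp
    moreover have "x < l" "y < l" using xy coset_subset_lessThan by auto
    ultimately show "x = y" by simp
  qed
  have "(\<lambda>i. (i * q) mod l) ` coset s = coset s"
    using card_image[OF inj] into finite_coset by (intro card_subset_eq) auto
  then show ?thesis using inj by (simp add: bij_betw_def)
qed

text \<open>The coefficients of M_s are fixed by y \<mapsto> y^q, because multiplication by q permutes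
  the coset.\<close>
lemma poly_over_M: "poly_over F (M s)"
proof -
  define \<phi> where "\<phi> y = y ^ q" for y :: 'e
  have "coeff (M s) k = \<phi> (coeff (M s) k)" for k
  proof -
    have "coeff (\<Prod>i\<in>coset s. [:- \<phi> (\<alpha> ^ i), 1:]) k = \<phi> (coeff (M s) k)"
      unfolding Mpoly_def
      by (rule coeff_prod_linear_hom)
        (use q_ge_2 finite_coset in \<open>simp_all add: \<phi>_def power_q_add power_q_uminus power_mult_distrib\<close>)
    moreover have "(\<Prod>i\<in>coset s. [:- \<phi> (\<alpha> ^ i), 1:]) = (\<Prod>i\<in>coset s. [:- (\<alpha> ^ ((i * q) mod l)), 1:])"
      by (intro prod.cong refl) (simp add: \<phi>_def power_mult[symmetric] power_alpha_mod[symmetric])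
    moreover have "\<dots> = M s"
      unfolding Mpoly_def
      by (rule prod.reindex_bij_betw[OF bij_betw_times_q_coset, of "\<lambda>j. [:- (\<alpha> ^ j), 1:]"])
    ultimately show ?thesis by simp
  qed
  then show ?thesis unfolding poly_over_def using mem_if_power_q_eq by (metis \<phi>_def)
qed

lemma prod_M_reps: "(\<Prod>s\<in>reps. M s) = monom 1 l - 1"
proof -
  have "(\<Prod>s\<in>reps. M s) = (\<Prod>i\<in>(\<Union>s\<in>reps. coset s). [:- (\<alpha> ^ i), 1:])"
    unfolding Mpoly_def
    by (rule prod.UNION_disjoint[symmetric]) (use finite_reps finite_coset reps_coset_disjoint in auto)
  also have "\<dots> = (\<Prod>i<l. [:- (\<alpha> ^ i), 1:])" by (simp add: UN_reps_coset)
  also have "\<dots> = monom 1 l - 1"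
  proof (rule poly_eqI_degree_lead_coeff[where A = "(\<lambda>i. \<alpha> ^ i) ` {..<l}"])
    have dp: "degree (\<Prod>i<l. [:- (\<alpha> ^ i), 1::'e:]) = l" by (simp add: degree_prod_eq_sum_degree)
    have lp: "lead_coeff (\<Prod>i<l. [:- (\<alpha> ^ i), 1::'e:]) = 1" by (simp add: lead_coeff_prod)
    show "coeff (\<Prod>i<l. [:- (\<alpha> ^ i), 1:]) l = coeff (monom 1 l - 1) l"
      using dp lp l_pos by (simp add: coeff_1)
    have "inj_on (\<lambda>i. \<alpha> ^ i) {..<l}" by (rule inj_onI) (auto intro: power_alpha_inj_less)
    then show "card ((\<lambda>i. \<alpha> ^ i) ` {..<l}) \<ge> l" by (simp add: card_image)
    show "degree (\<Prod>i<l. [:- (\<alpha> ^ i), 1:]) \<le> l" using dp by simp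
    show "degree (monom 1 l - 1 :: 'e poly) \<le> l"
      using l_pos by (intro degree_diff_le) (auto intro: degree_monom_le)
    fix z assume "z \<in> (\<lambda>i. \<alpha> ^ i) ` {..<l}"
    then obtain j where j: "j < l" "z = \<alpha> ^ j" by auto
    have "poly (\<Prod>i<l. [:- (\<alpha> ^ i), 1:]) z = 0" using j by (auto simp: poly_prod)
    moreover have "poly (monom 1 l - 1) z = 0"
      using j root by (simp add: poly_monom power_mult[symmetric] mult.commute[of j] power_mult)
    ultimately show "poly (\<Prod>i<l. [:- (\<alpha> ^ i), 1:]) z = poly (monom 1 l - 1) z" by simp
  qed
  finally show ?thesis .
qed
end

section \<open>Reciprocals of the minimal polynomials\<close>

lemma diff_power_CHAR_power:
  fixes a b :: "'a::comm_ring_1"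
  assumes "prime CHAR('a)"
  shows "(a - b) ^ (CHAR('a) ^ n) = a ^ (CHAR('a) ^ n) - b ^ (CHAR('a) ^ n)"
proof -
  have "a ^ (CHAR('a) ^ n) = ((a - b) + b) ^ (CHAR('a) ^ n)" by simp
  also have "\<dots> = (a - b) ^ (CHAR('a) ^ n) + b ^ (CHAR('a) ^ n)"
    using assms by (rule freshmans_dream') simp
  finally show ?thesis by (simp add: algebra_simps)
qed

locale cyclotomic_qc = qc_ring F m + cyclotomic F q l \<alpha> for F :: "'e::field set" and m q l \<alpha> +
  fixes t :: nat
  assumes m_eq: "m = l * CHAR('e) ^ t"
begin

lemma power_alpha_neg_mod: "\<alpha> ^ i * \<alpha> ^ neg_mod i = 1"
proof -
  have "int ((i + neg_mod i) mod l) = (int i + (- int i) mod int l) mod int l"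
    by (simp add: of_nat_mod int_neg_mod)
  also have "\<dots> = 0" by (simp add: mod_add_right_eq)
  finally have "\<alpha> ^ (i + neg_mod i) = \<alpha> ^ 0"
    by (simp only: power_alpha_eq_iff) simp
  then show ?thesis by (simp add: power_add)
qed

lemma recip_linear_cong:
  "[recip [:- (\<alpha> ^ i), 1:] = [:- (\<alpha> ^ i):] * monom 1 (m - 1) * [:- (\<alpha> ^ neg_mod i), 1:]] (mod X)"
proof -
  define a where "a = \<alpha> ^ i"
  define b where "b = \<alpha> ^ neg_mod i"
  have ab: "[:a:] * [:b:] = (1 :: 'e poly)"
    using power_alpha_neg_mod by (simp add: a_def b_def mult.commute)
  have m1: "monom (1::'e) (m - 1) * monom 1 1 = monom 1 m"
    using m_pos by (simp add: mult_monom)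
  have "recip [:- a, 1:] = - [:a:] + monom 1 (m - 1)"
    by (simp add: recip_def pcompose_pCons)
  moreover have "[:- b, 1:] = - [:b:] + monom 1 1"
    by (simp add: monom_altdef)
  ultimately have "recip [:- a, 1:] - [:- a:] * monom 1 (m - 1) * [:- b, 1:]
      = [:a:] * (monom 1 (m - 1) * monom 1 1 - 1) + (1 - [:a:] * [:b:]) * monom 1 (m - 1)"
    by (simp add: algebra_simps)
  also have "\<dots> = [:a:] * X"
    unfolding ab m1 by (simp add: xm1_def)
  finally have "X dvd recip [:- a, 1:] - [:- a:] * monom 1 (m - 1) * [:- b, 1:]"
    by (metis dvd_triv_right)
  then show ?thesis
    unfolding a_def b_def cong_iff_dvd_diff .
qed

text \<open>The unit is M_s(0) x^(-deg M_s), the leading coefficient of the reciprocal polynomial.\<close>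
definition recip_M_unit :: "nat \<Rightarrow> 'e poly" where
  "recip_M_unit s = monom (poly (M s) 0) ((m - 1) * card (coset s))"

lemma recip_M_cong: "[recip (M s) = recip_M_unit s * M (N s)] (mod X)"
proof -
  have "recip (M s) = (\<Prod>i\<in>coset s. recip [:- (\<alpha> ^ i), 1:])"
    by (simp add: Mpoly_def recip_prod)
  also have "[\<dots> = (\<Prod>i\<in>coset s. [:- (\<alpha> ^ i):] * monom 1 (m - 1) * [:- (\<alpha> ^ neg_mod i), 1:])] (mod X)"
    by (intro cong_prod recip_linear_cong)
  also have "(\<Prod>i\<in>coset s. [:- (\<alpha> ^ i):] * monom 1 (m - 1) * [:- (\<alpha> ^ neg_mod i), 1:])
      = (\<Prod>i\<in>coset s. [:- (\<alpha> ^ i):] * monom 1 (m - 1)) * (\<Prod>i\<in>coset s. [:- (\<alpha> ^ neg_mod i), 1:])"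
    by (rule prod.distrib)
  also have "(\<Prod>i\<in>coset s. [:- (\<alpha> ^ i):] * monom 1 (m - 1))
      = [:\<Prod>i\<in>coset s. - (\<alpha> ^ i):] * monom 1 (m - 1) ^ card (coset s)"
    by (simp only: prod.distrib prod_to_poly prod_constant)
  also have "\<dots> = recip_M_unit s"
    by (simp add: recip_M_unit_def Mpoly_def poly_prod monom_power smult_monom)
  also have "(\<Prod>i\<in>coset s. [:- (\<alpha> ^ neg_mod i), 1:]) = (\<Prod>j\<in>neg_mod ` coset s. [:- (\<alpha> ^ j), 1:])"
    by (simp add: prod.reindex[OF inj_on_neg_mod])
  also have "\<dots> = M (N s)"
    by (simp add: Mpoly_def neg_mod_image_coset coset_neg_rep)
  finally show ?thesis .
qed

lemma recip_M_unit_invertible: "\<exists>w. poly_over F w \<and> [w * recip_M_unit s = 1] (mod X)"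
proof -
  define c where "c = poly (M s) 0"
  have "c \<noteq> 0"
    using finite_coset alpha_nonzero by (simp add: c_def Mpoly_def poly_prod)
  have "c \<in> F"
    using poly_over_M[of s] by (simp add: c_def poly_0_coeff_0 poly_over_def)
  define w where "w = monom (inverse c) (card (coset s))"
  have "card (coset s) + (m - 1) * card (coset s) = m * card (coset s)"
    using m_pos by (cases m) auto
  then have "w * recip_M_unit s = monom 1 (m * card (coset s))"
    using \<open>c \<noteq> 0\<close> by (simp add: w_def recip_M_unit_def c_def mult_monom)
  then have "[w * recip_M_unit s = 1] (mod X)"
    using xm1_dvd_monom_mult by (simp add: cong_iff_dvd_diff)
  moreover have "poly_over F w"
    unfolding w_def using \<open>c \<in> F\<close> by (intro poly_over_monom inverse_mem)
  ultimately show ?thesis by blast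
qed


definition M_prod :: "(nat \<Rightarrow> nat) \<Rightarrow> 'e poly" where
  "M_prod E = (\<Prod>s\<in>reps. M s ^ E s)"

lemma poly_over_M_prod: "poly_over F (M_prod E)"
  unfolding M_prod_def by (intro poly_over_prod poly_over_power poly_over_M)

lemma M_prod_mult: "M_prod a * M_prod b = M_prod (\<lambda>s. a s + b s)"
  by (simp add: M_prod_def prod.distrib power_add)

lemma M_prod_cong: "(\<And>s. s \<in> reps \<Longrightarrow> a s = b s) \<Longrightarrow> M_prod a = M_prod b"
  unfolding M_prod_def by (intro prod.cong) simp_all

lemma M_prod_split: "(\<And>s. s \<in> reps \<Longrightarrow> a s \<le> b s) \<Longrightarrow> M_prod b = M_prod a * M_prod (\<lambda>s. b s - a s)"
  unfolding M_prod_mult by (intro M_prod_cong) simp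

lemma M_prod_CHAR_power: "M_prod (\<lambda>_. CHAR('e) ^ t) = X"
proof -
  have "M_prod (\<lambda>_. CHAR('e) ^ t) = (monom 1 l - 1) ^ (CHAR('e) ^ t)"
    by (simp add: M_prod_def prod_M_reps flip: prod_power_distrib)
  also have "\<dots> = monom 1 l ^ (CHAR('e) ^ t) - 1"
    using diff_power_CHAR_power[of "monom 1 l" "1 :: 'e poly" t] CHAR_prime by simp
  finally show ?thesis
    by (simp add: xm1_def monom_power m_eq)
qed

lemma xm1_eq_M_prod_complement:
  "(\<And>s. s \<in> reps \<Longrightarrow> E s \<le> CHAR('e) ^ t) \<Longrightarrow> X = M_prod E * M_prod (\<lambda>s. CHAR('e) ^ t - E s)"
  by (subst M_prod_CHAR_power[symmetric], rule M_prod_split)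

lemma recip_M_prod_cong:
  "[recip (M_prod E) = (\<Prod>s\<in>reps. recip_M_unit s ^ E s) * M_prod (\<lambda>s. E (N s))] (mod X)"
proof -
  have "recip (M_prod E) = (\<Prod>s\<in>reps. recip (M s) ^ E s)"
    by (simp add: M_prod_def recip_prod recip_power)
  also have "[\<dots> = (\<Prod>s\<in>reps. (recip_M_unit s * M (N s)) ^ E s)] (mod X)"
    by (intro cong_prod cong_pow recip_M_cong)
  also have "(\<Prod>s\<in>reps. (recip_M_unit s * M (N s)) ^ E s)
      = (\<Prod>s\<in>reps. recip_M_unit s ^ E s) * (\<Prod>s\<in>reps. M (N s) ^ E (N (N s)))"
    by (simp add: power_mult_distrib prod.distrib neg_rep_neg_rep)
  also have "(\<Prod>s\<in>reps. M (N s) ^ E (N (N s))) = M_prod (\<lambda>s. E (N s))"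
    unfolding M_prod_def by (rule prod.reindex_bij_betw[OF bij_betw_neg_rep])
  finally show ?thesis .
qed

lemma M_prod_neg_rep_cong:
  "\<exists>w. poly_over F w \<and> [M_prod (\<lambda>s. E (N s)) = w * recip (M_prod E)] (mod X)"
proof -
  have "\<forall>s. \<exists>w. poly_over F w \<and> [w * recip_M_unit s = 1] (mod X)"
    using recip_M_unit_invertible by blast
  then obtain W where W: "\<And>s. poly_over F (W s)" "\<And>s. [W s * recip_M_unit s = 1] (mod X)"
    by (metis choice)
  define w where "w = (\<Prod>s\<in>reps. W s ^ E s)"
  have "[w * recip (M_prod E) = w * ((\<Prod>s\<in>reps. recip_M_unit s ^ E s) * M_prod (\<lambda>s. E (N s)))] (mod X)"
    by (intro cong_mult cong_refl recip_M_prod_cong)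
  also have "w * ((\<Prod>s\<in>reps. recip_M_unit s ^ E s) * M_prod (\<lambda>s. E (N s)))
      = (\<Prod>s\<in>reps. (W s * recip_M_unit s) ^ E s) * M_prod (\<lambda>s. E (N s))"
    by (simp add: w_def power_mult_distrib prod.distrib)
  also have "[\<dots> = (\<Prod>s\<in>reps. 1 ^ E s) * M_prod (\<lambda>s. E (N s))] (mod X)"
    by (intro cong_mult cong_refl cong_prod cong_pow W)
  finally have "[M_prod (\<lambda>s. E (N s)) = w * recip (M_prod E)] (mod X)"
    by (simp add: cong_sym_eq)
  moreover have "poly_over F w"
    unfolding w_def by (intro poly_over_prod poly_over_power W)
  ultimately show ?thesis by blast
qed

lemma xm1_dvd_M_prod_mult_recip:
  assumes "\<And>s. s \<in> reps \<Longrightarrow> E s \<le> CHAR('e) ^ t"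
  shows "X dvd M_prod E * recip (M_prod (\<lambda>s. CHAR('e) ^ t - E (N s)))"
proof -
  have "[M_prod E * recip (M_prod (\<lambda>s. CHAR('e) ^ t - E (N s)))
      = M_prod E * ((\<Prod>s\<in>reps. recip_M_unit s ^ (CHAR('e) ^ t - E (N s)))
          * M_prod (\<lambda>s. CHAR('e) ^ t - E (N (N s))))] (mod X)"
    by (intro cong_mult cong_refl recip_M_prod_cong)
  also have "M_prod (\<lambda>s. CHAR('e) ^ t - E (N (N s))) = M_prod (\<lambda>s. CHAR('e) ^ t - E s)"
    by (intro M_prod_cong) (simp add: neg_rep_neg_rep)
  also have "M_prod E * ((\<Prod>s\<in>reps. recip_M_unit s ^ (CHAR('e) ^ t - E (N s))) * M_prod (\<lambda>s. CHAR('e) ^ t - E s))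
      = (\<Prod>s\<in>reps. recip_M_unit s ^ (CHAR('e) ^ t - E (N s))) * X"
    using xm1_eq_M_prod_complement[OF assms] by simp
  also have "[\<dots> = 0] (mod X)"
    by (rule cong_mult_self_right)
  finally show ?thesis
    by (simp add: cong_0_iff)
qed


lemma M_prod_cofactor_cong:
  "\<exists>w. poly_over F w \<and> [M_prod (\<lambda>s. CHAR('e) ^ t - E s) = w * recip (M_prod (\<lambda>s. CHAR('e) ^ t - E (N s)))] (mod X)"
proof -
  have "M_prod (\<lambda>s. CHAR('e) ^ t - E (N (N s))) = M_prod (\<lambda>s. CHAR('e) ^ t - E s)"
    by (intro M_prod_cong) (simp add: neg_rep_neg_rep)
  then show ?thesis
    using M_prod_neg_rep_cong[of "\<lambda>s. CHAR('e) ^ t - E (N s)"] by (simp only:)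
qed

theorem dual_cyclotomic_qc_code:
  fixes a b :: "nat \<Rightarrow> nat" and v1 v2 :: "'e poly"
  assumes exponents: "\<And>s. s \<in> reps \<Longrightarrow> a s \<le> b s \<and> b s + b (N s) \<le> CHAR('e) ^ t"
    and v: "poly_over F v1" "poly_over F v2"
    and cancel: "\<And>r. X dvd r * (1 - v1 * v2) \<Longrightarrow> X dvd r"
  defines "C \<equiv> qc_code F m (M_prod a) (v1 * M_prod a) (v2 * M_prod b) (M_prod b)"
  shows "euclid_dual F (2 * m) C =
      qc_code F m (M_prod (\<lambda>s. CHAR('e) ^ t - a (N s)))
        (- conjbar m v2 * M_prod (\<lambda>s. CHAR('e) ^ t - a (N s)))
        (- conjbar m v1 * M_prod (\<lambda>s. CHAR('e) ^ t - b (N s)))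
        (M_prod (\<lambda>s. CHAR('e) ^ t - b (N s)))
    \<and> euclid_dual F (2 * m) C \<subseteq> C"
proof -
  let ?P = "CHAR('e) ^ t"
  have a_le: "a s \<le> ?P" and b_le: "b s \<le> ?P" and b_le_h1: "b s \<le> ?P - a (N s)"
    and b_le_h2: "b s \<le> ?P - b (N s)" if "s \<in> reps" for s
    using exponents[OF that] exponents[OF neg_rep_in_reps[of s]] by auto
  obtain w1 where w1: "poly_over F w1"
    "[M_prod (\<lambda>s. ?P - a s) = w1 * recip (M_prod (\<lambda>s. ?P - a (N s)))] (mod X)"
    using M_prod_cofactor_cong by blast
  obtain w2 where w2: "poly_over F w2"
    "[M_prod (\<lambda>s. ?P - b s) = w2 * recip (M_prod (\<lambda>s. ?P - b (N s)))] (mod X)"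
    using M_prod_cofactor_cong by blast
  have "poly_over F (1 - v1 * v2)"
    using v by (intro poly_over_intros)
  then obtain e where e: "poly_over F e" "[e * (1 - v1 * v2) = 1] (mod X)"
    using exists_inverse_mod_xm1[OF finite _ cancel] by blast
  have factors: "M_prod b = M_prod a * M_prod (\<lambda>s. b s - a s)"
    "M_prod (\<lambda>s. ?P - a (N s)) = M_prod b * M_prod (\<lambda>s. ?P - a (N s) - b s)"
    "M_prod (\<lambda>s. ?P - b (N s)) = M_prod b * M_prod (\<lambda>s. ?P - b (N s) - b s)"
    by (rule M_prod_split; use exponents b_le_h1 b_le_h2 in blast)+
  have complements: "X = M_prod a * M_prod (\<lambda>s. ?P - a s)" "X = M_prod b * M_prod (\<lambda>s. ?P - b s)"
    by (rule xm1_eq_M_prod_complement; use a_le b_le in blast)+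
  have xm1_dvd: "X dvd M_prod a * recip (M_prod (\<lambda>s. ?P - a (N s)))"
    "X dvd M_prod b * recip (M_prod (\<lambda>s. ?P - b (N s)))"
    by (rule xm1_dvd_M_prod_mult_recip; use a_le b_le in blast)+
  have "qc_code_pair F m (M_prod a) (M_prod b)
      (M_prod (\<lambda>s. ?P - a (N s))) (M_prod (\<lambda>s. ?P - b (N s)))
      (M_prod (\<lambda>s. ?P - a s)) (M_prod (\<lambda>s. ?P - b s))
      (M_prod (\<lambda>s. b s - a s)) (M_prod (\<lambda>s. ?P - a (N s) - b s)) (M_prod (\<lambda>s. ?P - b (N s) - b s))
      w1 w2 v1 v2 e"
    by unfold_locales
      (fact poly_over_M_prod w1 w2 v e factors complements xm1_dvd)+
  then show ?thesis
    unfolding C_def by (rule qc_code_pair.dual_qc_code_pair)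
qed

corollary dual_cyclotomic_qc_code_int:
  fixes r1 r2 :: "nat \<Rightarrow> int" and v1 v2 :: "'e poly"
  assumes r: "\<forall>s\<in>reps. 0 < r1 s \<and> r1 s < r2 s \<and> r2 s < int (CHAR('e) ^ t) - r2 (N s)"
    and v: "poly_over F v1" "poly_over F v2"
    and cancel: "\<And>r. X dvd r * (1 - v1 * v2) \<Longrightarrow> X dvd r"
  defines "C \<equiv> qc_code F m
      (\<Prod>s\<in>reps. M s ^ nat (r1 s)) (v1 * (\<Prod>s\<in>reps. M s ^ nat (r1 s)))
      (v2 * (\<Prod>s\<in>reps. M s ^ nat (r2 s))) (\<Prod>s\<in>reps. M s ^ nat (r2 s))"
  shows "euclid_dual F (2 * m) C =
      qc_code F m
        (\<Prod>s\<in>reps. M s ^ nat (int (CHAR('e) ^ t) - r1 (N s)))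
        (- conjbar m v2 * (\<Prod>s\<in>reps. M s ^ nat (int (CHAR('e) ^ t) - r1 (N s))))
        (- conjbar m v1 * (\<Prod>s\<in>reps. M s ^ nat (int (CHAR('e) ^ t) - r2 (N s))))
        (\<Prod>s\<in>reps. M s ^ nat (int (CHAR('e) ^ t) - r2 (N s)))
    \<and> euclid_dual F (2 * m) C \<subseteq> C"
proof -
  have exponents: "nat (r1 s) \<le> nat (r2 s) \<and> nat (r2 s) + nat (r2 (N s)) \<le> CHAR('e) ^ t"
    if "s \<in> reps" for s
  proof -
    have "0 < r1 s" "r1 s < r2 s" "r2 s + r2 (N s) < int (CHAR('e) ^ t)" "0 < r2 (N s)"
      using r that neg_rep_in_reps[of s] by auto
    then show ?thesis
      by (simp add: nat_le_iff flip: nat_add_distrib)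
  qed
  have "\<forall>s\<in>reps. 0 < r1 (N s) \<and> r1 (N s) < r2 (N s)"
    using r neg_rep_in_reps by blast
  then have pos: "\<forall>s\<in>reps. 0 < r1 (N s)" "\<forall>s\<in>reps. 0 < r2 (N s)"
    by auto
  have cofactor: "(\<Prod>s\<in>reps. M s ^ nat (int (CHAR('e) ^ t) - r (N s)))
      = M_prod (\<lambda>s. CHAR('e) ^ t - nat (r (N s)))"
    if "\<forall>s\<in>reps. 0 < r (N s)" for r
    unfolding M_prod_def using that
    by (auto intro!: prod.cong simp: nat_diff_distrib' less_imp_le simp flip: of_nat_power)
  show ?thesis
    unfolding C_def cofactor[OF pos(1)] cofactor[OF pos(2)]
    using dual_cyclotomic_qc_code[of "\<lambda>s. nat (r1 s)" "\<lambda>s. nat (r2 s)", OF exponents v cancel]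
    unfolding M_prod_def .
qed

end

theorem mainTheorem15:
  fixes F :: "'e::field_gcd set" and \<alpha> :: 'e
    and p q t l m :: nat and r1 r2 :: "nat \<Rightarrow> int" and v1 v2 :: "'e poly"
  assumes "is_subfield F" and "finite F" and "q = card F"
    and "p = CHAR('e)"
    and "t \<ge> 1" and "l \<ge> 1" and "coprime l p" and "m = l * p ^ t"
    and "\<alpha> ^ l = 1" and "\<forall>j. 0 < j \<and> j < l \<longrightarrow> \<alpha> ^ j \<noteq> 1"
    and "poly_over F v1" and "poly_over F v2"
    and "degree v1 < m" and "degree v2 < m"
    and "gcd (v1 * v2 - 1) (xm1 m) = 1"
    and "\<forall>s\<in>cyc_reps q l. 0 < r1 s \<and> r1 s < r2 s
            \<and> r2 s < int (p ^ t) - r2 (neg_rep q l s)"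
  defines "M \<equiv> Mpoly q l \<alpha>" and "T \<equiv> cyc_reps q l" and "N \<equiv> neg_rep q l"
  defines "C \<equiv> qc_code F m
             (\<Prod>s\<in>T. M s ^ nat (r1 s)) (v1 * (\<Prod>s\<in>T. M s ^ nat (r1 s)))
             (v2 * (\<Prod>s\<in>T. M s ^ nat (r2 s))) (\<Prod>s\<in>T. M s ^ nat (r2 s))"
  shows "euclid_dual F (2 * m) C =
           qc_code F m
             (\<Prod>s\<in>T. M s ^ nat (int (p ^ t) - r1 (N s)))
             (- conjbar m v2 * (\<Prod>s\<in>T. M s ^ nat (int (p ^ t) - r1 (N s))))
             (- conjbar m v1 * (\<Prod>s\<in>T. M s ^ nat (int (p ^ t) - r2 (N s))))
             (\<Prod>s\<in>T. M s ^ nat (int (p ^ t) - r2 (N s)))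
         \<and> euclid_dual F (2 * m) C \<subseteq> C"
proof -
  interpret cyclotomic F q l \<alpha>
    using assms(1-3,6,9,10) by unfold_locales
  have "m > 0"
    using assms(4,6,8) CHAR_prime prime_gt_0_nat by simp
  interpret cyclotomic_qc F m q l \<alpha> t
    using assms(1,4,8) \<open>m > 0\<close> by unfold_locales simp_all
  have "coprime (xm1 m) (1 - v1 * v2)"
    using assms(15) by (metis coprime_commute coprime_iff_gcd_eq_1 coprime_minus_left_iff minus_diff_eq)
  then have "xm1 m dvd r * (1 - v1 * v2) \<Longrightarrow> xm1 m dvd r" for r
    by (simp add: coprime_dvd_mult_left_iff)
  from dual_cyclotomic_qc_code_int[OF assms(16)[unfolded assms(4)] assms(11,12) this]
  show ?thesis
    unfolding C_def M_def T_def N_def assms(4) .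
qed

end
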